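(* Let $r$ and $k$ be positive integers with $r+k\equiv 1\pmod 2$ and $k\le r$, let $H$ be the complete graph with $V(H)=[r+k]$, and let $\mathbf{E}=(E_0,E_1,E_2)$ be an ordered partition of $E(H)$. If $|E_1|+2|E_2|<\min\left\{3(r+k-1),\ \frac18(r+k+3)(r+k+5)\right\}$, then $H$ has an almost perfect matching which is also a good matching for $\mathbf{E}$.
   Context: $[m]=\{1,\dots,m\}$. An ordered partition $(E_0,E_1,E_2)$ of a set is a triple of pairwise disjoint (possibly empty) sets with that union. A matching $M$ is a good matching for $\mathbf{E}$ if $M\cap E_2=\emptyset$ and $|M\cap E_1|\le1$. An almost perfect matching of $H$ is a matching covering all but exactly one vertex of $H$. *)

theory Defs
  imports Complex_Main
begin

definition complete_edges :: "'a set \<Rightarrow> 'a set set" where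
  "complete_edges V = {e. e \<subseteq> V \<and> card e = 2}"

definition ordered_partition3 :: "'b set \<Rightarrow> 'b set \<Rightarrow> 'b set \<Rightarrow> 'b set \<Rightarrow> bool" where
  "ordered_partition3 E E0 E1 E2 \<longleftrightarrow>
     E0 \<inter> E1 = {} \<and> E0 \<inter> E2 = {} \<and> E1 \<inter> E2 = {} \<and> E0 \<union> E1 \<union> E2 = E"

definition is_matching :: "'a set set \<Rightarrow> 'a set set \<Rightarrow> bool" where
  "is_matching E M \<longleftrightarrow> M \<subseteq> E \<and> (\<forall>e\<in>M. \<forall>f\<in>M. e \<noteq> f \<longrightarrow> e \<inter> f = {})"

definition almost_perfect_matching :: "'a set \<Rightarrow> 'a set set \<Rightarrow> 'a set set \<Rightarrow> bool" where
  "almost_perfect_matching V E M \<longleftrightarrow> is_matching E M \<and> card (V - \<Union>M) = 1"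

definition good_matching :: "'a set set \<Rightarrow> 'a set set \<Rightarrow> 'a set set \<Rightarrow> bool" where
  "good_matching E1 E2 M \<longleftrightarrow> M \<inter> E2 = {} \<and> card (M \<inter> E1) \<le> 1"

end

theory Submission
  imports Defs
begin

text \<open>Let \<open>M\<close> be a maximum matching using only edges of \<open>E\<^sub>0\<close>; the number \<open>u\<close> of vertices it
  leaves uncovered is odd. If \<open>u = 1\<close>, \<open>M\<close> itself is a good almost perfect matching. If \<open>u = 3\<close>
  and no good almost perfect matching exists, then adding an edge inside the uncovered triple, or
  exchanging an edge of \<open>M\<close> along an augmenting path of length 3, must always use an edge of
  \<open>E\<^sub>2\<close> or two edges outside \<open>E\<^sub>0\<close>. Hence the triangle on the uncovered vertices weighs 6 and
  each edge of \<open>M\<close> sends weight at least 6 to them, so \<open>|E\<^sub>1| + 2|E\<^sub>2| \<ge> 3(n - 1)\<close>.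
  If \<open>u \<ge> 5\<close>, maximality of \<open>M\<close> (no augmenting paths of length 1, 3 or 5) forces many edges
  outside \<open>E\<^sub>0\<close>: all \<open>u choose 2\<close> edges among the uncovered vertices; from each edge of \<open>M\<close> at
  least \<open>2u - 2\<close> edges to them, except for \<open>t\<close> edges of \<open>M\<close> with at least \<open>u\<close> each; and the
  \<open>t choose 2\<close> edges joining the endpoints of those \<open>t\<close> edges that have no \<open>E\<^sub>0\<close>-neighbour among
  the uncovered vertices. This count violates one of the two assumed bounds.\<close>

section \<open>Edges of a complete graph\<close>

lemma doubleton_in_complete_edges_iff:
  "{p, q} \<in> complete_edges V \<longleftrightarrow> p \<in> V \<and> q \<in> V \<and> p \<noteq> q"
  by (auto simp: complete_edges_def card_insert_if)

lemma complete_edgesE: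
  assumes "e \<in> complete_edges V"
  obtains a b where "e = {a, b}" "a \<noteq> b" "a \<in> V" "b \<in> V"
  using assms unfolding complete_edges_def by (auto simp: card_2_iff)

lemma complete_edges_mono: "U \<subseteq> V \<Longrightarrow> complete_edges U \<subseteq> complete_edges V"
  unfolding complete_edges_def by auto

lemma complete_edges_empty [simp]: "complete_edges {} = {}"
  unfolding complete_edges_def by auto

lemma finite_complete_edges: "finite V \<Longrightarrow> finite (complete_edges V)"
  unfolding complete_edges_def by (rule finite_subset[of _ "Pow V"]) auto

lemma card_complete_edges: "finite V \<Longrightarrow> card (complete_edges V) = card V choose 2"
  unfolding complete_edges_def by (rule n_subsets)

lemma sum_cross_edges:
  assumes "A \<inter> B = {}" "finite A" "finite B"
  shows "(\<Sum>e\<in>{{p, q} | p q. p \<in> A \<and> q \<in> B}. h e) = (\<Sum>p\<in>A. \<Sum>q\<in>B. h {p, q})"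
proof -
  have "inj_on (\<lambda>(p, q). {p, q}) (A \<times> B)"
    using assms(1) by (auto simp: inj_on_def doubleton_eq_iff)
  moreover have "{{p, q} | p q. p \<in> A \<and> q \<in> B} = (\<lambda>(p, q). {p, q}) ` (A \<times> B)" by auto
  ultimately have "(\<Sum>e\<in>{{p, q} | p q. p \<in> A \<and> q \<in> B}. h e) = (\<Sum>(p, q)\<in>A \<times> B. h {p, q})"
    by (simp add: sum.reindex case_prod_unfold)
  also have "\<dots> = (\<Sum>p\<in>A. \<Sum>q\<in>B. h {p, q})" by (rule sum.cartesian_product[symmetric])
  finally show ?thesis .
qed

text \<open>The edges inside \<open>U\<close>, between \<open>U\<close> and \<open>Q\<close>, and inside \<open>B \<subseteq> Q\<close> are disjoint.\<close>
lemma sum_complete_edges_three_parts_le: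
  fixes h :: "'a set \<Rightarrow> nat"
  assumes "finite V" "U \<subseteq> V" "Q \<subseteq> V" "U \<inter> Q = {}" "B \<subseteq> Q"
  shows "(\<Sum>e\<in>complete_edges U. h e) + (\<Sum>p\<in>U. \<Sum>q\<in>Q. h {p, q}) + (\<Sum>e\<in>complete_edges B. h e)
           \<le> (\<Sum>e\<in>complete_edges V. h e)"
proof -
  define C where "C = {{p, q} | p q. p \<in> U \<and> q \<in> Q}"
  have finite: "finite U" "finite Q"
    using assms(1-3) by (auto intro: finite_subset)
  have C_sub: "C \<subseteq> complete_edges V"
    using assms(2-4) by (auto simp: C_def doubleton_in_complete_edges_iff)
  have U_sub: "complete_edges U \<subseteq> complete_edges V" and B_sub: "complete_edges B \<subseteq> complete_edges V"
    using assms(2,3,5) by (auto intro!: complete_edges_mono)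
  have "complete_edges U \<inter> C = {}"
    unfolding C_def complete_edges_def using assms(4) by blast
  moreover have "e \<notin> complete_edges U \<union> C" if eB: "e \<in> complete_edges B" for e
  proof -
    obtain a b where e: "e = {a, b}" "a \<noteq> b" "a \<in> B" "b \<in> B" using eB by (rule complete_edgesE)
    then have "a \<notin> U" "b \<notin> U" using assms(4,5) by auto
    then show ?thesis using e by (auto simp: C_def complete_edges_def doubleton_eq_iff)
  qed
  ultimately have disj: "complete_edges U \<inter> C = {}" "(complete_edges U \<union> C) \<inter> complete_edges B = {}"
    by blast+
  have fin: "finite (complete_edges U)" "finite C" "finite (complete_edges B)"
    using U_sub C_sub B_sub by (auto intro: finite_subset[OF _ finite_complete_edges[OF assms(1)]])
  have cross: "(\<Sum>e\<in>C. h e) = (\<Sum>p\<in>U. \<Sum>q\<in>Q. h {p, q})"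
    unfolding C_def by (rule sum_cross_edges[OF assms(4) finite])
  have "(\<Sum>e\<in>complete_edges U. h e) + (\<Sum>p\<in>U. \<Sum>q\<in>Q. h {p, q}) + (\<Sum>e\<in>complete_edges B. h e)
      = (\<Sum>e\<in>complete_edges U \<union> C \<union> complete_edges B. h e)"
    using fin disj by (simp add: sum.union_disjoint flip: cross)
  also have "\<dots> \<le> (\<Sum>e\<in>complete_edges V. h e)"
    using U_sub C_sub B_sub by (intro sum_mono2 finite_complete_edges assms(1)) auto
  finally show ?thesis .
qed

section \<open>Matchings and augmenting paths\<close>

lemma is_matching_disjoint:
  "is_matching E M \<Longrightarrow> e \<in> M \<Longrightarrow> f \<in> M \<Longrightarrow> e \<noteq> f \<Longrightarrow> e \<inter> f = {}"
  unfolding is_matching_def by simp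

lemma is_matching_mono: "is_matching E M \<Longrightarrow> E \<subseteq> E' \<Longrightarrow> is_matching E' M"
  unfolding is_matching_def by blast

lemma is_matching_insert:
  "is_matching E M \<Longrightarrow> f \<in> E \<Longrightarrow> f \<inter> \<Union>M = {} \<Longrightarrow> is_matching E (insert f M)"
  unfolding is_matching_def by blast

lemma is_matching_subset: "is_matching E M \<Longrightarrow> M' \<subseteq> M \<Longrightarrow> is_matching E M'"
  unfolding is_matching_def by blast

lemma Union_Diff_matching:
  assumes "is_matching E M" "X \<subseteq> M"
  shows "\<Union>(M - X) = \<Union>M - \<Union>X"
proof (intro equalityI subsetI)
  fix x assume "x \<in> \<Union>(M - X)"
  then obtain e where e: "e \<in> M" "e \<notin> X" "x \<in> e" by blast
  have "e \<inter> f = {}" if "f \<in> X" for f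
    using is_matching_disjoint[OF assms(1) e(1), of f] assms(2) e(2) that by blast
  then show "x \<in> \<Union>M - \<Union>X" using e by blast
qed (use assms(2) in blast)

lemma finite_edge_of_matching:
  assumes "is_matching E M" "E \<subseteq> complete_edges V" "f \<in> M"
  shows "finite f"
proof -
  have "card f = 2" using assms unfolding is_matching_def complete_edges_def by auto
  then show ?thesis by (intro card_ge_0_finite) simp
qed

lemma sum_Union_matching:
  assumes "is_matching E M" "E \<subseteq> complete_edges V"
  shows "(\<Sum>q\<in>\<Union>M. g q) = (\<Sum>f\<in>M. \<Sum>q\<in>f. g q)"
  using sum.Union_disjoint[of M g] finite_edge_of_matching[OF assms] is_matching_disjoint[OF assms(1)]
  by simp

lemma card_Union_matching:
  assumes "is_matching E M" "E \<subseteq> complete_edges V"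
  shows "card (\<Union>M) = 2 * card M"
proof -
  have "card (\<Union>M) = (\<Sum>f\<in>M. card f)"
    using card_Union_disjoint[of M] finite_edge_of_matching[OF assms] is_matching_disjoint[OF assms(1)]
    by (simp add: pairwise_def disjnt_def)
  also have "\<dots> = (\<Sum>f\<in>M. 2)"
    using assms by (intro sum.cong) (auto simp: is_matching_def complete_edges_def subset_iff)
  finally show ?thesis by simp
qed

lemma augment_path3:
  assumes M: "is_matching E M" and ab: "{a, b} \<in> M" "a \<noteq> b"
    and xy: "x \<notin> \<Union>M" "y \<notin> \<Union>M" "x \<noteq> y" and E: "{x, a} \<in> E" "{y, b} \<in> E"
  defines "N \<equiv> insert {x, a} (insert {y, b} (M - {{a, b}}))"
  shows "is_matching E N" "\<Union>N = insert x (insert y (\<Union>M))"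
proof -
  have U: "\<Union>(M - {{a, b}}) = \<Union>M - {a, b}"
    using Union_Diff_matching[OF M] ab(1) by simp
  have in_M: "a \<in> \<Union>M" "b \<in> \<Union>M" using ab(1) by auto
  have "is_matching E (insert {y, b} (M - {{a, b}}))"
    by (rule is_matching_insert[OF is_matching_subset[OF M Diff_subset] E(2)]) (use U xy(2) in auto)
  then show "is_matching E N"
    unfolding N_def by (rule is_matching_insert[OF _ E(1)]) (use U xy in_M ab(2) in auto)
  show "\<Union>N = insert x (insert y (\<Union>M))"
    using U in_M by (auto simp: N_def)
qed

lemma augment_path5:
  assumes M: "is_matching E M" and ab: "{a, b} \<in> M" "a \<noteq> b" and cd: "{c, d} \<in> M" "c \<noteq> d"
    and distinct: "{a, b} \<noteq> {c, d}"
    and xy: "x \<notin> \<Union>M" "y \<notin> \<Union>M" "x \<noteq> y" and E: "{x, a} \<in> E" "{b, d} \<in> E" "{c, y} \<in> E"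
  defines "N \<equiv> insert {x, a} (insert {c, y} (insert {b, d} (M - {{a, b}, {c, d}})))"
  shows "is_matching E N" "\<Union>N = insert x (insert y (\<Union>M))"
proof -
  have "{a, b} \<inter> {c, d} = {}" using is_matching_disjoint[OF M ab(1) cd(1) distinct] .
  then have ne: "a \<noteq> c" "a \<noteq> d" "b \<noteq> c" "b \<noteq> d" by auto
  have U: "\<Union>(M - {{a, b}, {c, d}}) = \<Union>M - {a, b} - {c, d}"
    using Union_Diff_matching[OF M] ab(1) cd(1) by auto
  have in_M: "a \<in> \<Union>M" "b \<in> \<Union>M" "c \<in> \<Union>M" "d \<in> \<Union>M" using ab(1) cd(1) by auto
  have "is_matching E (insert {b, d} (M - {{a, b}, {c, d}}))"
    by (rule is_matching_insert[OF is_matching_subset[OF M Diff_subset] E(2)]) (simp add: U)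
  then have "is_matching E (insert {c, y} (insert {b, d} (M - {{a, b}, {c, d}})))"
    by (rule is_matching_insert[OF _ E(3)]) (use ne xy(2) in_M cd(2) in \<open>auto simp: U\<close>)
  then show "is_matching E N"
    unfolding N_def by (rule is_matching_insert[OF _ E(1)]) (use ne xy in_M ab(2) in \<open>auto simp: U\<close>)
  show "\<Union>N = insert x (insert y (\<Union>M))"
    using U in_M by (auto simp: N_def)
qed

definition maximum_matching :: "'a set set \<Rightarrow> 'a set set \<Rightarrow> bool" where
  "maximum_matching E M \<longleftrightarrow> is_matching E M \<and> (\<forall>M'. is_matching E M' \<longrightarrow> card M' \<le> card M)"

lemma maximum_matching_exists:
  assumes "finite E"
  obtains M where "maximum_matching E M"
proof -
  have "card M < Suc (card E)" if "is_matching E M" for M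
    using that card_mono[OF assms] by (simp add: is_matching_def less_Suc_eq_le)
  moreover have "is_matching E {}" by (simp add: is_matching_def)
  ultimately have "\<exists>M. is_matching E M \<and> (\<forall>M'. is_matching E M' \<longrightarrow> card M' \<le> card M)"
    using Lattices_Big.ex_has_greatest_nat[of "is_matching E" "{}" card "Suc (card E)"] by blast
  then show ?thesis using that by (auto simp: maximum_matching_def)
qed

lemma maximum_matching_not_augmentable:
  assumes max: "maximum_matching E M" and E: "E \<subseteq> complete_edges V" "finite V"
    and N: "is_matching E N" "\<Union>N = insert x (insert y (\<Union>M))"
    and xy: "x \<noteq> y" "x \<notin> \<Union>M" "y \<notin> \<Union>M"
  shows False
proof -
  have M: "is_matching E M" using max by (simp add: maximum_matching_def)
  have "\<Union>M \<subseteq> V" using M E(1) by (auto simp: is_matching_def complete_edges_def)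
  then have "finite (\<Union>M)" using E(2) by (rule finite_subset)
  then have "card (\<Union>N) = card (\<Union>M) + 2" using N(2) xy by simp
  then have "card N = card M + 1"
    using card_Union_matching[OF M E(1)] card_Union_matching[OF N(1) E(1)] by simp
  then show False using max N(1) by (auto simp: maximum_matching_def)
qed

section \<open>Edge weights of an ordered partition\<close>

definition edge_weight :: "'a set set \<Rightarrow> 'a set set \<Rightarrow> 'a set \<Rightarrow> nat" where
  "edge_weight E1 E2 e = (if e \<in> E1 then 1 else if e \<in> E2 then 2 else 0)"

locale edge_partition =
  fixes V :: "'a set" and E0 E1 E2 :: "'a set set"
  assumes finite_V: "finite V"
    and partition: "ordered_partition3 (complete_edges V) E0 E1 E2"
begin

definition good_almost_perfect :: "'a set set \<Rightarrow> bool" where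
  "good_almost_perfect N \<longleftrightarrow> almost_perfect_matching V (complete_edges V) N \<and> good_matching E1 E2 N"

lemma E0_subset: "E0 \<subseteq> complete_edges V"
  and E1_E2_disjoint: "E1 \<inter> E2 = {}"
  using partition unfolding ordered_partition3_def by auto

lemma edge_weight_eq_0_iff: "e \<in> complete_edges V \<Longrightarrow> edge_weight E1 E2 e = 0 \<longleftrightarrow> e \<in> E0"
  using partition unfolding ordered_partition3_def edge_weight_def by auto

lemma not_in_E2_if_edge_weight_le_1: "edge_weight E1 E2 e \<le> 1 \<Longrightarrow> e \<notin> E2"
  using E1_E2_disjoint unfolding edge_weight_def by (auto split: if_splits)

lemma sum_edge_weight: "(\<Sum>e\<in>complete_edges V. edge_weight E1 E2 e) = card E1 + 2 * card E2"
proof -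
  have E12: "E1 \<subseteq> complete_edges V" "E2 \<subseteq> complete_edges V"
    using partition unfolding ordered_partition3_def by auto
  have "(\<Sum>e\<in>complete_edges V. edge_weight E1 E2 e)
      = (\<Sum>e\<in>complete_edges V. of_bool (e \<in> E1) + 2 * of_bool (e \<in> E2))"
    using E1_E2_disjoint by (intro sum.cong) (auto simp: edge_weight_def)
  also have "\<dots> = card (complete_edges V \<inter> E1) + 2 * card (complete_edges V \<inter> E2)"
    using finite_complete_edges[OF finite_V]
    by (simp add: sum.distrib flip: sum_distrib_left sum.inter_filter)
  finally show ?thesis using E12 by (simp add: Int_absorb1)
qed

lemma not_E0_le_edge_weight: "e \<in> complete_edges V \<Longrightarrow> of_bool (e \<notin> E0) \<le> edge_weight E1 E2 e"
  using edge_weight_eq_0_iff by fastforce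

lemma good_almost_perfect_matchingI:
  assumes "is_matching (complete_edges V) N" "card (V - \<Union>N) = 1"
    and "N \<subseteq> insert f E0" "f \<notin> E2"
  shows "good_almost_perfect N"
proof -
  have "N \<inter> E1 \<subseteq> {f}" "N \<inter> E2 = {}"
    using assms(3,4) partition unfolding ordered_partition3_def by auto
  then have "card (N \<inter> E1) \<le> 1" using card_mono[of "{f}"] by fastforce
  then show ?thesis
    using assms \<open>N \<inter> E2 = {}\<close>
    by (simp add: good_almost_perfect_def almost_perfect_matching_def good_matching_def)
qed

end

section \<open>Matchings inside \<open>E\<^sub>0\<close> leaving one or three vertices uncovered\<close>

locale E0_matching = edge_partition +
  fixes M :: "'a set set"
  assumes matching: "is_matching E0 M"
begin

definition uncovered :: "'a set" where
  "uncovered = V - \<Union>M"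

lemma is_matching_complete_edges: "is_matching (complete_edges V) M"
  using matching E0_subset by (rule is_matching_mono)

lemma M_subset_complete_edges: "M \<subseteq> complete_edges V"
  using matching E0_subset unfolding is_matching_def by auto

lemma Union_M_subset: "\<Union>M \<subseteq> V"
  using M_subset_complete_edges unfolding complete_edges_def by auto

lemma uncovered_subset: "uncovered \<subseteq> V"
  and finite_uncovered: "finite uncovered"
  and uncovered_disjoint: "uncovered \<inter> \<Union>M = {}"
  using finite_V by (auto simp: uncovered_def)

lemma matched_edgeD:
  assumes "{a, b} \<in> M"
  shows "a \<noteq> b" "a \<in> \<Union>M" "b \<in> \<Union>M"
  using assms M_subset_complete_edges doubleton_in_complete_edges_iff[of a b V] by auto

lemma complete_edge_uncovered_matched:
  "p \<in> uncovered \<Longrightarrow> q \<in> \<Union>M \<Longrightarrow> {p, q} \<in> complete_edges V"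
  using uncovered_subset Union_M_subset uncovered_disjoint
  by (auto simp: doubleton_in_complete_edges_iff)

lemma card_V: "card V = card uncovered + 2 * card M"
proof -
  have "card uncovered = card V - card (\<Union>M)"
    unfolding uncovered_def using Union_M_subset finite_V by (simp add: card_Diff_subset finite_subset)
  then show ?thesis
    using card_Union_matching[OF matching E0_subset] card_mono[OF finite_V Union_M_subset] by simp
qed

lemma sum_uncovered_Union_M:
  "(\<Sum>p\<in>uncovered. \<Sum>q\<in>\<Union>M. h {p, q}) = (\<Sum>f\<in>M. \<Sum>p\<in>uncovered. \<Sum>q\<in>f. h {p, q})"
  by (simp add: sum_Union_matching[OF matching E0_subset] flip: sum.swap[of _ M])

lemma good_if_one_uncovered:
  assumes "card uncovered = 1"
  shows "good_almost_perfect M"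
proof -
  have "M \<inter> E1 = {}" "M \<inter> E2 = {}"
    using matching partition unfolding is_matching_def ordered_partition3_def by auto
  then show ?thesis
    using is_matching_complete_edges assms
    by (simp add: good_almost_perfect_def almost_perfect_matching_def good_matching_def uncovered_def)
qed

lemma card_uncovered_Diff_pair:
  "card uncovered = 3 \<Longrightarrow> p \<in> uncovered \<Longrightarrow> q \<in> uncovered \<Longrightarrow> p \<noteq> q
    \<Longrightarrow> card (uncovered - {p, q}) = 1"
  using finite_uncovered by (simp add: card_Diff_subset)

lemma three_uncovered_edge_weight:
  assumes three: "card uncovered = 3"
    and no_good: "\<nexists>N. good_almost_perfect N"
    and pq: "p \<in> uncovered" "q \<in> uncovered" "p \<noteq> q"
  shows "edge_weight E1 E2 {p, q} = 2"
proof (rule ccontr)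
  assume "edge_weight E1 E2 {p, q} \<noteq> 2"
  then have "{p, q} \<notin> E2" using E1_E2_disjoint by (auto simp: edge_weight_def disjoint_iff split: if_splits)
  let ?N = "insert {p, q} M"
  have "is_matching (complete_edges V) ?N"
    using pq uncovered_subset uncovered_disjoint
    by (intro is_matching_insert[OF is_matching_complete_edges]) (auto simp: doubleton_in_complete_edges_iff)
  moreover have "V - \<Union>?N = uncovered - {p, q}" by (auto simp: uncovered_def)
  moreover have "?N \<subseteq> insert {p, q} E0" using matching by (auto simp: is_matching_def)
  ultimately show False
    using good_almost_perfect_matchingI card_uncovered_Diff_pair[OF three pq] \<open>{p, q} \<notin> E2\<close> no_good
    by metis
qed

lemma three_uncovered_swap_weight:
  assumes three: "card uncovered = 3"
    and no_good: "\<nexists>N. good_almost_perfect N"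
    and ab: "{a, b} \<in> M" and p: "p \<in> uncovered" "p' \<in> uncovered" "p \<noteq> p'"
  shows "2 \<le> edge_weight E1 E2 {p, a} + edge_weight E1 E2 {p', b}"
proof -
  \<comment> \<open>Otherwise exchanging \<open>{a, b}\<close> for \<open>{p, a}\<close> and \<open>{p', b}\<close> gives a good almost perfect matching.\<close>
  have swap: False
    if ab: "{a, b} \<in> M" and p: "p \<in> uncovered" "p' \<in> uncovered" "p \<noteq> p'"
      and w: "edge_weight E1 E2 {p, a} \<le> 1" "edge_weight E1 E2 {p', b} = 0" for a b p p'
  proof -
    have pa: "{p, a} \<in> complete_edges V" and p'b: "{p', b} \<in> complete_edges V"
      using p matched_edgeD[OF ab] by (auto intro: complete_edge_uncovered_matched)
    then have "{p', b} \<in> E0" using w(2) edge_weight_eq_0_iff by blast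
    have p_free: "p \<notin> \<Union>M" "p' \<notin> \<Union>M" using p uncovered_disjoint by auto
    note N = augment_path3[OF is_matching_complete_edges ab matched_edgeD(1)[OF ab] p_free p(3) pa p'b]
    have "V - \<Union>(insert {p, a} (insert {p', b} (M - {{a, b}}))) = uncovered - {p, p'}"
      unfolding N(2) by (auto simp: uncovered_def)
    moreover have "insert {p, a} (insert {p', b} (M - {{a, b}})) \<subseteq> insert {p, a} E0"
      using matching \<open>{p', b} \<in> E0\<close> by (auto simp: is_matching_def)
    ultimately show False
      using good_almost_perfect_matchingI[OF N(1)] card_uncovered_Diff_pair[OF three p]
        not_in_E2_if_edge_weight_le_1[OF w(1)] no_good
      by metis
  qed
  have ba: "{b, a} \<in> M" using ab by (simp add: insert_commute)
  show ?thesis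
  proof (rule ccontr)
    assume "\<not> ?thesis"
    then have "edge_weight E1 E2 {p, a} \<le> 1 \<and> edge_weight E1 E2 {p', b} = 0
             \<or> edge_weight E1 E2 {p', b} \<le> 1 \<and> edge_weight E1 E2 {p, a} = 0"
      by linarith
    then show False using swap[OF ab p] swap[OF ba p(2,1) p(3)[symmetric]] by blast
  qed
qed

lemma three_uncovered_matched_edge_weight:
  assumes three: "card uncovered = 3"
    and no_good: "\<nexists>N. good_almost_perfect N"
    and f: "f \<in> M"
  shows "6 \<le> (\<Sum>p\<in>uncovered. \<Sum>q\<in>f. edge_weight E1 E2 {p, q})"
proof -
  obtain x y z where U: "uncovered = {x, y, z}" "x \<noteq> y" "y \<noteq> z" "x \<noteq> z"
    using three card_3_iff by metis
  obtain a b where ab: "f = {a, b}" "a \<noteq> b"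
    using f M_subset_complete_edges by (blast elim: complete_edgesE)
  let ?w = "\<lambda>p q. edge_weight E1 E2 {p, q}"
  have "(\<Sum>p\<in>uncovered. \<Sum>q\<in>f. ?w p q) = (?w x a + ?w y b) + (?w y a + ?w z b) + (?w z a + ?w x b)"
    using U ab by (simp add: algebra_simps)
  also have "6 \<le> \<dots>"
  proof -
    have "{a, b} \<in> M" using f ab(1) by simp
    note swap = three_uncovered_swap_weight[OF three no_good this]
    have "2 \<le> ?w x a + ?w y b" "2 \<le> ?w y a + ?w z b" "2 \<le> ?w z a + ?w x b"
      using U by (auto intro!: swap)
    then show ?thesis by linarith
  qed
  finally show ?thesis .
qed

lemma good_if_three_uncovered:
  assumes three: "card uncovered = 3" and budget: "card E1 + 2 * card E2 + 3 < 3 * card V"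
  shows "\<exists>N. good_almost_perfect N"
proof (rule ccontr)
  assume no_good: "\<not> ?thesis"
  let ?w = "edge_weight E1 E2"
  have "(\<Sum>e\<in>complete_edges uncovered. ?w e) = (\<Sum>e\<in>complete_edges uncovered. 2)"
    using three_uncovered_edge_weight[OF three no_good] by (intro sum.cong) (auto elim: complete_edgesE)
  also have "\<dots> = 6"
    using three finite_uncovered by (simp add: card_complete_edges choose_two)
  finally have inner: "(\<Sum>e\<in>complete_edges uncovered. ?w e) = 6" .
  have "(\<Sum>f\<in>M. 6) \<le> (\<Sum>f\<in>M. \<Sum>p\<in>uncovered. \<Sum>q\<in>f. ?w {p, q})"
    using three_uncovered_matched_edge_weight[OF three no_good] by (rule sum_mono)
  then have "6 + 6 * card M \<le> card E1 + 2 * card E2"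
    using sum_complete_edges_three_parts_le[OF finite_V uncovered_subset Union_M_subset uncovered_disjoint,
        of "{}" ?w]
    by (simp add: inner sum_uncovered_Union_M sum_edge_weight)
  then show False using budget card_V three by simp
qed

end

section \<open>A maximum matching inside \<open>E\<^sub>0\<close> leaving at least five vertices uncovered\<close>

locale maximum_E0_matching = E0_matching +
  assumes maximum: "maximum_matching E0 M"
begin

lemma not_augmentable:
  assumes "is_matching E0 N" "\<Union>N = insert x (insert y (\<Union>M))"
    and "x \<noteq> y" "x \<in> uncovered" "y \<in> uncovered"
  shows False
  using maximum_matching_not_augmentable[OF maximum E0_subset finite_V assms(1,2,3)]
    assms(4,5) uncovered_disjoint by blast

lemma uncovered_edge_not_in_E0:
  assumes "p \<in> uncovered" "q \<in> uncovered" "p \<noteq> q"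
  shows "{p, q} \<notin> E0"
proof
  assume "{p, q} \<in> E0"
  then have "is_matching E0 (insert {p, q} M)"
    using assms uncovered_disjoint by (intro is_matching_insert[OF matching]) auto
  then show False using not_augmentable[of "insert {p, q} M"] assms by auto
qed

definition E0_neighbours :: "'a \<Rightarrow> 'a set" where
  "E0_neighbours q = {p \<in> uncovered. {p, q} \<in> E0}"

lemma E0_neighbours_subset: "E0_neighbours q \<subseteq> uncovered"
  unfolding E0_neighbours_def by auto

lemma E0_neighbours_matched_edge_eq:
  assumes ab: "{a, b} \<in> M" and x: "x \<in> E0_neighbours a" and y: "y \<in> E0_neighbours b"
  shows "x = y"
proof (rule ccontr)
  assume "x \<noteq> y"
  have "x \<notin> \<Union>M" "y \<notin> \<Union>M" "{x, a} \<in> E0" "{y, b} \<in> E0"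
    using x y uncovered_disjoint by (auto simp: E0_neighbours_def)
  note N = augment_path3[OF matching ab matched_edgeD(1)[OF ab] this(1,2) \<open>x \<noteq> y\<close> this(3,4)]
  show False using not_augmentable[OF N] \<open>x \<noteq> y\<close> x y by (auto simp: E0_neighbours_def)
qed

lemma E0_neighbours_two_matched_edges:
  assumes ab: "{a, b} \<in> M" and cd: "{c, d} \<in> M" and distinct: "{a, b} \<noteq> {c, d}"
    and x: "x \<in> E0_neighbours a" and y: "y \<in> E0_neighbours c" and "x \<noteq> y"
  shows "{b, d} \<notin> E0"
proof
  assume "{b, d} \<in> E0"
  have "x \<notin> \<Union>M" "y \<notin> \<Union>M" "{x, a} \<in> E0" "{c, y} \<in> E0"
    using x y uncovered_disjoint by (auto simp: E0_neighbours_def insert_commute)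
  note N = augment_path5[OF matching ab matched_edgeD(1)[OF ab] cd matched_edgeD(1)[OF cd] distinct
      this(1,2) \<open>x \<noteq> y\<close> this(3) \<open>{b, d} \<in> E0\<close> this(4)]
  show False using not_augmentable[OF N] \<open>x \<noteq> y\<close> x y by (auto simp: E0_neighbours_def)
qed

definition defect :: "'a set \<Rightarrow> nat" where
  "defect f = (\<Sum>p\<in>uncovered. \<Sum>q\<in>f. of_bool ({p, q} \<notin> E0))"

lemma defect_doubleton:
  assumes "a \<noteq> b"
  shows "defect {a, b} = (card uncovered - card (E0_neighbours a)) + (card uncovered - card (E0_neighbours b))"
proof -
  have "(\<Sum>p\<in>uncovered. of_bool ({p, q} \<notin> E0)) = card uncovered - card (E0_neighbours q)" for q
  proof -
    have "(\<Sum>p\<in>uncovered. of_bool ({p, q} \<notin> E0)) = card (uncovered \<inter> {p. {p, q} \<notin> E0})"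
      using finite_uncovered by simp
    also have "\<dots> = card (uncovered - E0_neighbours q)"
      by (rule arg_cong[where f = card]) (auto simp: E0_neighbours_def)
    also have "\<dots> = card uncovered - card (E0_neighbours q)"
      by (rule card_Diff_subset[OF finite_subset[OF E0_neighbours_subset finite_uncovered] E0_neighbours_subset])
    finally show ?thesis .
  qed
  then show ?thesis using assms by (simp add: defect_def sum.distrib del: sum_of_bool_eq)
qed

lemma low_defect_matched_edge:
  assumes u: "2 \<le> card uncovered" and f: "f \<in> M" and low: "defect f \<le> 2 * card uncovered - 3"
  obtains a b where "f = {a, b}" "a \<noteq> b" "E0_neighbours b = {}" "3 \<le> card (E0_neighbours a)"
proof -
  obtain a b where ab: "f = {a, b}" "a \<noteq> b"
    using f M_subset_complete_edges by (blast elim: complete_edgesE)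
  have defect_f: "defect f = (card uncovered - card (E0_neighbours a)) + (card uncovered - card (E0_neighbours b))"
    using defect_doubleton[OF ab(2)] ab(1) by simp
  have le: "card (E0_neighbours q) \<le> card uncovered" for q
    using finite_uncovered E0_neighbours_subset by (rule card_mono)
  have "E0_neighbours a = {} \<or> E0_neighbours b = {}"
  proof (rule ccontr)
    assume "\<not> ?thesis"
    then obtain x y where "x \<in> E0_neighbours a" "y \<in> E0_neighbours b" by blast
    then have "E0_neighbours a \<subseteq> {y}" "E0_neighbours b \<subseteq> {x}"
      using E0_neighbours_matched_edge_eq f ab(1) by blast+
    then have "card (E0_neighbours a) \<le> 1" "card (E0_neighbours b) \<le> 1"
      using card_mono[of "{y}"] card_mono[of "{x}"] by fastforce+
    then show False using low u defect_f by linarith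
  qed
  then show ?thesis
  proof
    assume "E0_neighbours a = {}"
    then have "3 \<le> card (E0_neighbours b)" using low u le[of b] defect_f by simp
    then show ?thesis using that[of b a] \<open>E0_neighbours a = {}\<close> ab by (simp add: insert_commute)
  next
    assume "E0_neighbours b = {}"
    then have "3 \<le> card (E0_neighbours a)" using low u le[of a] defect_f by simp
    then show ?thesis using that \<open>E0_neighbours b = {}\<close> ab by simp
  qed
qed

definition low_defect_edges :: "'a set set" where
  "low_defect_edges = {f \<in> M. defect f \<le> 2 * card uncovered - 3}"

definition isolated_ends :: "'a set" where
  "isolated_ends = {q \<in> \<Union>low_defect_edges. E0_neighbours q = {}}"

lemma low_defect_edge_end:
  assumes u: "2 \<le> card uncovered" and f: "f \<in> low_defect_edges"
  obtains a b where "f = {a, b}" "3 \<le> card (E0_neighbours a)" "f \<inter> isolated_ends = {b}"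
proof -
  obtain a b where ab: "f = {a, b}" "a \<noteq> b" "E0_neighbours b = {}" "3 \<le> card (E0_neighbours a)"
    using low_defect_matched_edge[OF u] f unfolding low_defect_edges_def by blast
  have "E0_neighbours a \<noteq> {}" using ab(4) by auto
  then have "f \<inter> isolated_ends = {b}"
    using f ab(1,3) by (auto simp: isolated_ends_def)
  then show ?thesis using that ab(1,4) by blast
qed

lemma card_isolated_ends:
  assumes u: "2 \<le> card uncovered"
  shows "card isolated_ends = card low_defect_edges"
proof -
  have low: "is_matching E0 low_defect_edges"
    using matching by (rule is_matching_subset) (auto simp: low_defect_edges_def)
  have "finite (\<Union>low_defect_edges)"
    using Union_M_subset finite_V by (auto simp: low_defect_edges_def intro: finite_subset)
  then have "card isolated_ends = (\<Sum>q\<in>\<Union>low_defect_edges. of_bool (q \<in> isolated_ends))"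
    by (simp add: isolated_ends_def Int_def)
  also have "\<dots> = (\<Sum>f\<in>low_defect_edges. \<Sum>q\<in>f. of_bool (q \<in> isolated_ends))"
    by (rule sum_Union_matching[OF low E0_subset])
  also have "\<dots> = (\<Sum>f\<in>low_defect_edges. 1)"
  proof (rule sum.cong[OF refl])
    fix f assume "f \<in> low_defect_edges"
    then obtain b where "f \<inter> isolated_ends = {b}" using low_defect_edge_end[OF u] by metis
    moreover have "finite f" using finite_edge_of_matching[OF low E0_subset \<open>f \<in> low_defect_edges\<close>] .
    ultimately show "(\<Sum>q\<in>f. of_bool (q \<in> isolated_ends)) = (1::nat)" by (simp add: Int_def)
  qed
  finally show ?thesis by simp
qed

lemma isolated_ends_edge_not_in_E0:
  assumes u: "2 \<le> card uncovered" and e: "e \<in> complete_edges isolated_ends"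
  shows "e \<notin> E0"
proof -
  obtain b d where bd: "e = {b, d}" "b \<noteq> d" "b \<in> isolated_ends" "d \<in> isolated_ends"
    using e by (rule complete_edgesE)
  obtain f1 f2 where f: "f1 \<in> low_defect_edges" "b \<in> f1" "f2 \<in> low_defect_edges" "d \<in> f2"
    using bd(3,4) unfolding isolated_ends_def by blast
  obtain a1 b1 where f1: "f1 = {a1, b1}" "3 \<le> card (E0_neighbours a1)" "f1 \<inter> isolated_ends = {b1}"
    using low_defect_edge_end[OF u f(1)] by blast
  obtain a2 d2 where f2: "f2 = {a2, d2}" "3 \<le> card (E0_neighbours a2)" "f2 \<inter> isolated_ends = {d2}"
    using low_defect_edge_end[OF u f(3)] by blast
  have "b \<in> f1 \<inter> isolated_ends" "d \<in> f2 \<inter> isolated_ends" using f bd(3,4) by auto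
  then have "b1 = b" "d2 = d" using f1(3) f2(3) by auto
  then have "f1 \<noteq> f2" using f1(3) f2(3) bd(2) by auto
  obtain y where y: "y \<in> E0_neighbours a2" using f2(2) by fastforce
  have "2 \<le> card (E0_neighbours a1 - {y})" using f1(2) by (auto simp: card_Diff_singleton_if)
  then have "E0_neighbours a1 - {y} \<noteq> {}" by (metis card.empty not_numeral_le_zero)
  then obtain x where x: "x \<in> E0_neighbours a1" "x \<noteq> y" by blast
  have "f1 \<in> M" "f2 \<in> M" using f(1,3) by (auto simp: low_defect_edges_def)
  then show ?thesis
    using E0_neighbours_two_matched_edges[of a1 b a2 d x y] f1(1) f2(1) \<open>b1 = b\<close> \<open>d2 = d\<close>
      \<open>f1 \<noteq> f2\<close> x y bd(1)
    by auto
qed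

end

text \<open>For \<open>u = 5\<close> the bound is quadratic in \<open>t\<close>: for \<open>m \<ge> 4\<close> its minimum over integers is at
  \<open>t \<in> {3, 4}\<close> and beats the linear budget, for \<open>m \<le> 3\<close> it is at \<open>t = m\<close> and beats the quadratic one.\<close>
lemma edge_count_exceeds_budget:
  fixes u m t W :: nat
  assumes u: "5 \<le> u" and tm: "t \<le> m"
    and W: "(u choose 2) + u * t + (2 * u - 2) * (m - t) + (t choose 2) \<le> W"
  shows "3 * (u + 2 * m) \<le> W + 3 \<or> (u + 2 * m + 3) * (u + 2 * m + 5) \<le> 8 * W"
proof (cases "u = 5")
  case False
  then have u6: "6 \<le> u" using u by simp
  define cross where "cross = u * t + (2 * u - 2) * (m - t)"
  have "6 * m \<le> u * t + u * (m - t)"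
    using u6 tm by (metis add_mult_distrib2 le_add_diff_inverse mult_le_mono1)
  also have "\<dots> \<le> cross" unfolding cross_def using u6 by (intro add_left_mono mult_right_mono) auto
  finally have "6 * m \<le> cross" .
  moreover have "6 * (u - 1) \<le> u * (u - 1)" using u6 by (intro mult_right_mono) auto
  then have "6 * (u - 1) div 2 \<le> u * (u - 1) div 2" by (rule div_le_mono)
  then have "3 * u - 3 \<le> (u choose 2)" by (simp add: choose_two)
  moreover have "(u choose 2) + cross \<le> W" using W unfolding cross_def by simp
  ultimately have "3 * (u + 2 * m) \<le> W + 3" using u6 by arith
  then show ?thesis ..
next
  case True
  have "(5::nat) choose 2 = 10" by (simp add: choose_two)
  then have "10 + 5 * t + 8 * (m - t) + (t choose 2) \<le> W" using W True by simp
  moreover have "2 * (t choose 2) = t * (t - 1)"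
    using times_binomial_minus1_eq[of 2 t] by simp
  moreover have "t * (t - 1) + t = t * t" by (cases t) auto
  ultimately have "20 + 10 * t + 16 * (m - t) + t * t \<le> 2 * W + t" by linarith
  then have W2: "20 + 10 * int t + 16 * (int m - int t) + int t * int t \<le> 2 * int W + int t"
    using tm by (simp flip: of_nat_mult of_nat_add)
  show ?thesis
  proof (cases "4 \<le> m")
    case True
    have "0 \<le> (int t - 3) * (int t - 4)"
      by (cases "t \<le> 3") (auto intro: mult_nonpos_nonpos mult_nonneg_nonneg)
    then have "3 * (int u + 2 * int m) \<le> int W + 3" using W2 True \<open>u = 5\<close> by (simp add: algebra_simps)
    then have "3 * (u + 2 * m) \<le> W + 3" by arith
    then show ?thesis ..
  next
    case False
    have "0 \<le> (int m - int t) * (7 - int m - int t)"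
      using False tm by (intro mult_nonneg_nonneg) auto
    then have "(int u + 2 * int m + 3) * (int u + 2 * int m + 5) \<le> 8 * int W" using W2 \<open>u = 5\<close> by (simp add: algebra_simps)
    then have "int ((u + 2 * m + 3) * (u + 2 * m + 5)) \<le> int (8 * W)" by simp
    then show ?thesis by linarith
  qed
qed

context maximum_E0_matching
begin

lemma finite_M: "finite M"
  using M_subset_complete_edges finite_complete_edges[OF finite_V] by (rule finite_subset)

lemma sum_defect_lower_bound:
  assumes u: "2 \<le> card uncovered"
  shows "card uncovered * card low_defect_edges + (2 * card uncovered - 2) * (card M - card low_defect_edges)
           \<le> (\<Sum>f\<in>M. defect f)"
proof -
  have low: "low_defect_edges \<subseteq> M" by (auto simp: low_defect_edges_def)
  have "card uncovered \<le> defect f" if f: "f \<in> low_defect_edges" for f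
  proof -
    obtain a b where "f = {a, b}" "a \<noteq> b" "E0_neighbours b = {}"
      using low_defect_matched_edge[OF u] f unfolding low_defect_edges_def by blast
    then show ?thesis using defect_doubleton by simp
  qed
  then have "card uncovered * card low_defect_edges \<le> (\<Sum>f\<in>low_defect_edges. defect f)"
    using sum_mono[of low_defect_edges "\<lambda>_. card uncovered" defect] by (simp add: mult.commute)
  moreover have "2 * card uncovered - 2 \<le> defect f" if "f \<in> M - low_defect_edges" for f
    using that u by (auto simp: low_defect_edges_def)
  then have "(2 * card uncovered - 2) * card (M - low_defect_edges) \<le> (\<Sum>f\<in>M - low_defect_edges. defect f)"
    using sum_mono[of "M - low_defect_edges" "\<lambda>_. 2 * card uncovered - 2" defect] by (simp add: mult.commute)
  moreover have "card (M - low_defect_edges) = card M - card low_defect_edges"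
    using finite_M low by (simp add: card_Diff_subset finite_subset)
  moreover have "(\<Sum>f\<in>M. defect f) = (\<Sum>f\<in>low_defect_edges. defect f) + (\<Sum>f\<in>M - low_defect_edges. defect f)"
    using finite_M low by (simp add: sum.subset_diff)
  ultimately show ?thesis by (metis add_mono)
qed

lemma budget_excludes_five_uncovered:
  assumes u: "5 \<le> card uncovered"
    and budget1: "card E1 + 2 * card E2 + 3 < 3 * card V"
    and budget2: "8 * (card E1 + 2 * card E2) < (card V + 3) * (card V + 5)"
  shows False
proof -
  define bad :: "'a set \<Rightarrow> nat" where "bad e = of_bool (e \<notin> E0)" for e
  have "(\<Sum>e\<in>complete_edges uncovered. bad e) = (\<Sum>e\<in>complete_edges uncovered. 1)"
    by (rule sum.cong) (auto simp: bad_def elim!: complete_edgesE dest: uncovered_edge_not_in_E0)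
  then have inner: "(\<Sum>e\<in>complete_edges uncovered. bad e) = card uncovered choose 2"
    using finite_uncovered by (simp add: card_complete_edges)
  have "(\<Sum>e\<in>complete_edges isolated_ends. bad e) = (\<Sum>e\<in>complete_edges isolated_ends. 1)"
    by (rule sum.cong) (use isolated_ends_edge_not_in_E0 u in \<open>auto simp: bad_def\<close>)
  moreover have "isolated_ends \<subseteq> \<Union>M"
    by (auto simp: isolated_ends_def low_defect_edges_def)
  ultimately have isolated: "(\<Sum>e\<in>complete_edges isolated_ends. bad e) = card low_defect_edges choose 2"
    using card_isolated_ends u Union_M_subset finite_V
    by (simp add: card_complete_edges finite_subset)
  have "(\<Sum>e\<in>complete_edges V. bad e) \<le> (\<Sum>e\<in>complete_edges V. edge_weight E1 E2 e)"
    using not_E0_le_edge_weight by (auto simp: bad_def intro: sum_mono)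
  moreover have "(\<Sum>p\<in>uncovered. \<Sum>q\<in>\<Union>M. bad {p, q}) = (\<Sum>f\<in>M. defect f)"
    unfolding defect_def bad_def by (rule sum_uncovered_Union_M)
  ultimately have "(card uncovered choose 2) + (\<Sum>f\<in>M. defect f) + (card low_defect_edges choose 2)
               \<le> card E1 + 2 * card E2"
    using sum_complete_edges_three_parts_le[OF finite_V uncovered_subset Union_M_subset uncovered_disjoint
        \<open>isolated_ends \<subseteq> \<Union>M\<close>, of bad]
    by (simp add: inner isolated sum_edge_weight)
  moreover have "card low_defect_edges \<le> card M"
    using finite_M by (rule card_mono) (auto simp: low_defect_edges_def)
  ultimately have "3 * (card uncovered + 2 * card M) \<le> card E1 + 2 * card E2 + 3
      \<or> (card uncovered + 2 * card M + 3) * (card uncovered + 2 * card M + 5) \<le> 8 * (card E1 + 2 * card E2)"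
    using sum_defect_lower_bound u by (intro edge_count_exceeds_budget) auto
  then show False using budget1 budget2 unfolding card_V by linarith
qed

end

theorem (in edge_partition) good_almost_perfect_matching_exists:
  assumes odd: "odd (card V)"
    and budget1: "card E1 + 2 * card E2 + 3 < 3 * card V"
    and budget2: "8 * (card E1 + 2 * card E2) < (card V + 3) * (card V + 5)"
  shows "\<exists>M. good_almost_perfect M"
proof -
  obtain M where max: "maximum_matching E0 M"
    using maximum_matching_exists finite_subset[OF E0_subset finite_complete_edges[OF finite_V]] by blast
  interpret maximum_E0_matching V E0 E1 E2 M
    using max by unfold_locales (simp add: maximum_matching_def)
  have "odd (card uncovered)" using odd card_V by simp
  then have "card uncovered = 1 \<or> card uncovered = 3 \<or> 5 \<le> card uncovered" by presburger
  then consider "card uncovered = 1" | "card uncovered = 3" | "5 \<le> card uncovered" by blast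
  then show ?thesis
  proof cases
    case 1
    then show ?thesis using good_if_one_uncovered by blast
  next
    case 2
    then show ?thesis using good_if_three_uncovered budget1 by blast
  next
    case 3
    then show ?thesis using budget_excludes_five_uncovered budget1 budget2 by blast
  qed
qed

theorem lemma14:
  fixes r k :: nat and E0 E1 E2 :: "nat set set"
  assumes "r > 0" and "k > 0"
    and "(r + k) mod 2 = 1"
    and "k \<le> r"
    and "ordered_partition3 (complete_edges {1..r+k}) E0 E1 E2"
    and "real (card E1 + 2 * card E2) <
           min (3 * (real (r + k) - 1)) ((real (r + k) + 3) * (real (r + k) + 5) / 8)"
  shows "\<exists>M. almost_perfect_matching {1..r+k} (complete_edges {1..r+k}) M
             \<and> good_matching E1 E2 M"
\<comment> \<open>Only the parity of \<open>r + k\<close> matters.\<close>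
proof -
  interpret edge_partition "{1..r+k}" E0 E1 E2
    using assms(5) by unfold_locales simp
  define W where "W = card E1 + 2 * card E2"
  have "real W < 3 * (real (r + k) - 1)" "real W < (real (r + k) + 3) * (real (r + k) + 5) / 8"
    using assms(6) by (simp_all add: W_def)
  then have "real (W + 3) < real (3 * (r + k))" "real (8 * W) < real ((r + k + 3) * (r + k + 5))"
    by simp_all
  then have "W + 3 < 3 * (r + k)" "8 * W < (r + k + 3) * (r + k + 5)"
    by (simp_all only: of_nat_less_iff)
  moreover have "odd (card {1..r+k})" using assms(3) by simp presburger
  ultimately show ?thesis
    using good_almost_perfect_matching_exists unfolding W_def good_almost_perfect_def by simp
qed

end
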